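(* Let $\mathfrak{G}_{\Sigma_{1,0}}$ be the Goldman Lie algebra of the closed torus, taken over $\mathbb{Q}$. Then $\mathfrak{G}_{\Sigma_{1,0}}$ is finitely generated as a Lie algebra over $\mathbb{Q}$.
   Context: Let $\Sigma_{1,0}=T^2$ be the closed oriented torus, and let $\hat\pi$ be the set of free homotopy classes of loops on it. Since $\pi_1(T^2)\cong\mathbb{Z}^2$ is abelian, $\hat\pi$ is identified with $\mathbb{Z}^2$; writing $a,b$ for the two standard generators, every element of $\hat\pi$ is written $a^ib^j$ with $(i,j)\in\mathbb{Z}^2$, and $1=a^0b^0$ denotes the class of the contractible loop. The Goldman bracket of two classes $\alpha,\beta$ (represented by loops meeting in transverse double points) is $[\alpha,\beta]=\sum_{p\in\alpha\cap\beta}\epsilon(p)\,\alpha*_p\beta$, where $\epsilon(p)=\pm1$ is the sign of the intersection at $p$ with respect to the orientation and $\alpha*_p\beta$ is the loop obtained by traversing $\alpha$ from $p$ and then $\beta$ from $p$; it is extended bilinearly. On the torus this gives $[a^ib^j,a^kb^l]=(il-jk)\,a^{i+k}b^{j+l}$. The Goldman Lie algebra $\mathfrak{G}_{\Sigma_{1,0}}$ over $\mathbb{Q}$ is the $\mathbb{Q}$-vector space with basis $\hat\pi$ equipped with this bracket. *)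

theory Defs
  imports Complex_Main "HOL-Library.Poly_Mapping"
begin

text \<open>The Goldman Lie algebra of the closed torus over the rationals: the rational
vector space with basis the free homotopy classes, identified with int \<times> int via
a^i b^j \<mapsto> (i,j); elements are finitely supported functions finitely supported functions from int pairs to rat.\<close>

type_synonym goldman_torus = "(int \<times> int) \<Rightarrow>\<^sub>0 rat"

definition gbasis :: "int \<Rightarrow> int \<Rightarrow> goldman_torus" where
  "gbasis i j = Poly_Mapping.single (i, j) 1"

definition gsmult :: "rat \<Rightarrow> goldman_torus \<Rightarrow> goldman_torus" where
  "gsmult c x = Poly_Mapping.map (\<lambda>r. c * r) x"

definition goldman_bracket :: "goldman_torus \<Rightarrow> goldman_torus \<Rightarrow> goldman_torus" where
  "goldman_bracket x y =
     (\<Sum>p\<in>Poly_Mapping.keys x. \<Sum>q\<in>Poly_Mapping.keys y.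
        Poly_Mapping.single (fst p + fst q, snd p + snd q)
          (of_int (fst p * snd q - snd p * fst q) * Poly_Mapping.lookup x p * Poly_Mapping.lookup y q))"

inductive_set lie_generated :: "goldman_torus set \<Rightarrow> goldman_torus set" for S where
  gen: "x \<in> S \<Longrightarrow> x \<in> lie_generated S"
| zero: "0 \<in> lie_generated S"
| add: "x \<in> lie_generated S \<Longrightarrow> y \<in> lie_generated S \<Longrightarrow> x + y \<in> lie_generated S"
| smult: "x \<in> lie_generated S \<Longrightarrow> gsmult c x \<in> lie_generated S"
| bracket: "x \<in> lie_generated S \<Longrightarrow> y \<in> lie_generated S \<Longrightarrow> goldman_bracket x y \<in> lie_generated S"

end

theory Submission
  imports Defs
begin

text \<open>Since [a^i b^j, a^k b^l] = (il - jk) a^(i+k) b^(j+l) and the scalars form a field, the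
  basis elements in a Lie subalgebra are closed under adding exponent vectors with nonzero
  determinant. Starting from a^(+-1) and b^(+-1) this reaches in turn a b^j for all j, b^j for
  j \<noteq> 0, a^i b^j for j \<noteq> 0, and a^i for i \<noteq> 0. The class 1 of the contractible loop is
  central and only ever arises with coefficient 0, so it must be a generator itself; the five
  elements 1, a^(+-1), b^(+-1) then span all basis elements, hence everything.\<close>

lemma goldman_bracket_gbasis:
  "goldman_bracket (gbasis i j) (gbasis k l) = gsmult (of_int (i * l - j * k)) (gbasis (i + k) (j + l))"
  unfolding goldman_bracket_def gbasis_def gsmult_def by (simp add: lookup_single)

lemma gsmult_gbasis: "gsmult c (gbasis i j) = Poly_Mapping.single (i, j) c"
  unfolding gsmult_def gbasis_def by simp

lemma gbasis_add_mem_lie_generated: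
  assumes "gbasis i j \<in> lie_generated S" "gbasis k l \<in> lie_generated S" "i * l - j * k \<noteq> 0"
  shows "gbasis (i + k) (j + l) \<in> lie_generated S"
proof -
  let ?d = "rat_of_int (i * l - j * k)"
  have "gsmult (1 / ?d) (goldman_bracket (gbasis i j) (gbasis k l)) \<in> lie_generated S"
    using assms(1,2) by (intro lie_generated.smult lie_generated.bracket)
  also have "gsmult (1 / ?d) (goldman_bracket (gbasis i j) (gbasis k l)) = gbasis (i + k) (j + l)"
  proof -
    have "?d \<noteq> 0"
      using assms(3) by (simp only: of_int_eq_0_iff not_False_eq_True)
    then show ?thesis
      unfolding goldman_bracket_gbasis gsmult_gbasis by (simp add: gsmult_def gbasis_def)
  qed
  finally show ?thesis .
qed

lemma update_eq_add_single:
  "Poly_Mapping.lookup f a = 0 \<Longrightarrow> Poly_Mapping.update a b f = f + Poly_Mapping.single a b"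
  by (rule poly_mapping_eqI) (auto simp: lookup_update lookup_add lookup_single when_def)

lemma lie_generated_eq_UNIV_if_gbasis_mem:
  assumes "\<And>i j. gbasis i j \<in> lie_generated S"
  shows "lie_generated S = UNIV"
proof -
  have single_mem: "Poly_Mapping.single p c \<in> lie_generated S" for p c
    using lie_generated.smult[OF assms[of "fst p" "snd p"], of c] by (simp add: gsmult_gbasis)
  have "x \<in> lie_generated S" for x
  proof (induction x rule: update_induct)
    case const
    show ?case by (rule lie_generated.zero)
  next
    case (update f a b)
    then show ?case
      by (simp add: update_eq_add_single in_keys_iff lie_generated.add single_mem)
  qed
  then show ?thesis by blast
qed

definition torus_generators :: "goldman_torus set" where
  "torus_generators = {gbasis 0 0, gbasis 1 0, gbasis (-1) 0, gbasis 0 1, gbasis 0 (-1)}"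

lemma torus_generators_mem:
  "gbasis 0 0 \<in> lie_generated torus_generators"
  "gbasis 1 0 \<in> lie_generated torus_generators" "gbasis (-1) 0 \<in> lie_generated torus_generators"
  "gbasis 0 1 \<in> lie_generated torus_generators" "gbasis 0 (-1) \<in> lie_generated torus_generators"
  by (auto intro: lie_generated.gen simp: torus_generators_def)

lemma gbasis_mem_lie_generated_torus_generators:
  "gbasis i j \<in> lie_generated torus_generators"
proof -
  let ?L = "lie_generated torus_generators"
  note step = gbasis_add_mem_lie_generated[where S = torus_generators]
  note gens = torus_generators_mem
  have a_b_pow: "gbasis 1 l \<in> ?L" for l
  proof (induction l rule: int_induct[where k = 0])
    case base show ?case using gens by simp
  next
    case (step1 l) show ?case using step[OF step1(2) gens(4)] by simp
  next
    case (step2 l) show ?case using step[OF step2(2) gens(5)] by simp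
  qed
  have b_pow: "gbasis 0 l \<in> ?L" if "l \<noteq> 0" for l
    using step[OF gens(3) a_b_pow[of l]] that by simp
  have a_pow_b_pow: "gbasis k l \<in> ?L" if "l \<noteq> 0" for k l
  proof (induction k rule: int_induct[where k = 0])
    case base show ?case using b_pow that by simp
  next
    case (step1 k) show ?case using step[OF step1(2) gens(2)] that by simp
  next
    case (step2 k) show ?case using step[OF step2(2) gens(3)] that by simp
  qed
  have a_pow: "gbasis k 0 \<in> ?L" if "k \<noteq> 0" for k
    using step[OF a_pow_b_pow[of "-1" k] gens(4)] that by simp
  show ?thesis
    using gens(1) a_pow a_pow_b_pow by (cases "i = 0"; cases "j = 0") auto
qed

theorem mainTheorem1:
  shows "\<exists>S :: goldman_torus set. finite S \<and> lie_generated S = UNIV"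
proof (intro exI conjI)
  show "finite torus_generators"
    by (simp add: torus_generators_def)
  show "lie_generated torus_generators = UNIV"
    by (rule lie_generated_eq_UNIV_if_gbasis_mem) (rule gbasis_mem_lie_generated_torus_generators)
qed

end
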